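(* Let $I$ be a finite set, $T$ a tree on $I$, and fix a nice total order on $\mathcal{V}(T)$ with associated edge-labeling $\lambda$. For each $F \in [\hat{0},T]\setminus\{T\}$ there exists a unique $G\in[\hat{0},T]$ covering $F$ such that $\lambda(F,G) = \min(\mathcal{V}(T)\setminus\mathcal{V}(F))$.
   Context: A tree on a finite set $I$ is a (non-planar) rooted binary tree whose leaves are bijectively labeled by $I$: vertices are inner vertices (valence $3$) and leaves and the root (valence $1$), edges oriented towards the root; one-leaf trees are allowed. A forest on $I$ is a set of trees whose leaf sets partition $I$; $\mathcal{V}(F)$ is its set of inner vertices. For forests $F,G$ on $I$, $F \leq G$ if there is a continuous map $F\to G$ which (D1) is increasing with respect to orientation towards the root, (D2) maps inner vertices to inner vertices injectively, (D3) is the identity of $I$ on leaves, (D4) is injective on each tree of $F$. This gives the poset $\operatorname{For}(I)$, graded by the number of inner vertices, with minimum $\hat{0}$ (no inner vertices). For $F \leq G \leq T$ the inner vertices are regarded, via these maps, as subsets $\mathcal{V}(F)\subseteq\mathcal{V}(G)\subseteq\mathcal{V}(T)$; if $G$ covers $F$ there is a unique $v$ with $\mathcal{V}(G)=\mathcal{V}(F)\cup\{v\}$. Partial order on $\mathcal{V}(T)$: $v \preceq v'$ if $v'$ lies on the path between the root and $v$. A nice total order is any total order on $\mathcal{V}(T)$ extending $\preceq$; using it, the inner vertices are labeled $1,\dots,n$ increasingly and identified with their labels (min is taken in this order). The edge-labeling $\lambda$ is defined for $F\lhd G$ in $[\hat{0},T]$ by $\mathcal{V}(G)=\mathcal{V}(F)\cup\{\lambda(F,G)\}$.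 *)

theory Defs
  imports Main
begin

text \<open>
A (non-planar, rooted, binary) forest on a finite leaf set I is represented,
up to isomorphism fixing the leaves, by its set of clusters: every vertex (leaf or inner
vertex) is represented by the set of leaves below it. Leaves are the singletons {i},
inner vertices are the clusters of cardinality at least 2; the clusters form a laminar
family of nonempty subsets of I containing all singletons, and every inner cluster is
the disjoint union of two clusters (its two children). Trees of the forest correspond
to the maximal clusters. (Root vertices of valence 1 are not represented explicitly;
each tree has exactly one, directly above its maximal cluster.)
\<close>

definition children :: "'a set \<Rightarrow> 'a set \<Rightarrow> 'a set \<Rightarrow> bool" where
  "children C C1 C2 \<longleftrightarrow> C1 \<noteq> {} \<and> C2 \<noteq> {} \<and> C1 \<inter> C2 = {} \<and> C1 \<union> C2 = C"

definition forest :: "'a set \<Rightarrow> 'a set set \<Rightarrow> bool" where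
  "forest I F \<longleftrightarrow> finite I
     \<and> (\<forall>C\<in>F. C \<noteq> {} \<and> C \<subseteq> I)
     \<and> (\<forall>i\<in>I. {i} \<in> F)
     \<and> (\<forall>C\<in>F. \<forall>D\<in>F. C \<subseteq> D \<or> D \<subseteq> C \<or> C \<inter> D = {})
     \<and> (\<forall>C\<in>F. card C \<ge> 2 \<longrightarrow> (\<exists>C1\<in>F. \<exists>C2\<in>F. children C C1 C2))"

text \<open>A tree on I: a forest with a single tree, i.e. I itself is a cluster (the top inner
vertex, or the unique leaf if I is a singleton).\<close>
definition tree :: "'a set \<Rightarrow> 'a set set \<Rightarrow> bool" where
  "tree I T \<longleftrightarrow> forest I T \<and> I \<in> T"

definition inner :: "'a set set \<Rightarrow> 'a set set" where
  "inner F = {C \<in> F. card C \<ge> 2}"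

text \<open>Combinatorial form of a continuous map F \<rightarrow> G satisfying (D1)-(D4), recorded on
vertices: phi sends each vertex of F to a vertex of G, each edge C' \<rightarrow> C of F goes to the
upward path from phi C' to phi C in G.
 (D3) leaves are fixed;
 (D2) inner vertices go to inner vertices, injectively;
 (D1) the map is increasing towards the root;
 (D4) injectivity on each tree: the images of the two edges below an inner vertex C
      are nondegenerate upward paths that meet only at phi C, i.e. phi C1 and phi C2 lie
      in different child branches of phi C (no proper subcluster of phi C contains both).\<close>
definition forest_map :: "'a set \<Rightarrow> 'a set set \<Rightarrow> 'a set set \<Rightarrow> ('a set \<Rightarrow> 'a set) \<Rightarrow> bool" where
  "forest_map I F G phi \<longleftrightarrow>
     (\<forall>C\<in>F. phi C \<in> G)
   \<and> (\<forall>i\<in>I. phi {i} = {i})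
   \<and> (\<forall>C\<in>inner F. phi C \<in> inner G) \<and> inj_on phi (inner F)
   \<and> (\<forall>C\<in>F. \<forall>D\<in>F. C \<subseteq> D \<longrightarrow> phi C \<subseteq> phi D)
   \<and> (\<forall>C\<in>F. \<forall>C1\<in>F. \<forall>C2\<in>F. children C C1 C2 \<longrightarrow>
        phi C1 \<subset> phi C \<and> phi C2 \<subset> phi C \<and>
        \<not> (\<exists>K\<in>G. K \<subset> phi C \<and> phi C1 \<union> phi C2 \<subseteq> K))"

definition forest_le :: "'a set \<Rightarrow> 'a set set \<Rightarrow> 'a set set \<Rightarrow> bool" where
  "forest_le I F G \<longleftrightarrow> forest I F \<and> forest I G \<and> (\<exists>phi. forest_map I F G phi)"

definition covers :: "'a set \<Rightarrow> 'a set set \<Rightarrow> 'a set set \<Rightarrow> bool" where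
  "covers I F G \<longleftrightarrow> forest_le I F G \<and> F \<noteq> G \<and>
     \<not> (\<exists>H. forest_le I F H \<and> forest_le I H G \<and> H \<noteq> F \<and> H \<noteq> G)"

definition bot_forest :: "'a set \<Rightarrow> 'a set set" where
  "bot_forest I = {{i} | i. i \<in> I}"

definition interval :: "'a set \<Rightarrow> 'a set set \<Rightarrow> 'a set set set" where
  "interval I T = {F. forest_le I (bot_forest I) F \<and> forest_le I F T}"

text \<open>Inner vertices of F \<le> T regarded as a subset of V(T) via the map F \<rightarrow> T
(this map is unique on inner vertices).\<close>
definition vT :: "'a set \<Rightarrow> 'a set set \<Rightarrow> 'a set set \<Rightarrow> 'a set set" where
  "vT I T F = (SOME phi. forest_map I F T phi) ` inner F"

text \<open>Nice total order: inner vertices labelled 1..n bijectively, increasing along the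
partial order v \<preceq> v' (v' on the path from v to the root, i.e. v \<subseteq> v').\<close>
definition nice_order :: "'a set set \<Rightarrow> ('a set \<Rightarrow> nat) \<Rightarrow> bool" where
  "nice_order T lab \<longleftrightarrow> bij_betw lab (inner T) {1..card (inner T)} \<and>
     (\<forall>v\<in>inner T. \<forall>w\<in>inner T. v \<subseteq> w \<longrightarrow> lab v \<le> lab w)"

definition min_vertex :: "('a set \<Rightarrow> nat) \<Rightarrow> 'a set set \<Rightarrow> 'a set" where
  "min_vertex lab S = (THE v. v \<in> S \<and> (\<forall>w\<in>S. lab v \<le> lab w))"

definition edge_label :: "'a set \<Rightarrow> 'a set set \<Rightarrow> 'a set set \<Rightarrow> 'a set set \<Rightarrow> 'a set" where
  "edge_label I T F G = (THE v. v \<notin> vT I T F \<and> vT I T G = insert v (vT I T F))"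

end

theory Submission
  imports Defs "HOL-Library.Disjoint_Sets"
begin

text \<open>A forest F \<le> A is determined by the partition of the leaves into its trees: it is the
  restriction of A to these blocks, and its vertices, seen in A, are the inner vertices u of A
  such that some tree of F has leaves below both children of u. Let v be the least vertex of T
  (in the nice order) missing from F. All vertices below v belong to F, so the two subtrees
  below v are clusters of F, contained in trees RA and RB of F. Merging RA and RB yields a forest
  between F and T whose only new vertex is v, because v is the only vertex of T having the leaves
  of RA below one child and those of RB below the other. Conversely, every cover of F merges two
  of its trees and adds one vertex; if that vertex is v, the two trees are RA and RB, so the
  cover is the one constructed.\<close>

section \<open>Clusters and least common ancestors\<close>

definition lca :: "'a set set \<Rightarrow> 'a set \<Rightarrow> 'a set" where
  "lca A C = \<Inter>{D \<in> A. C \<subseteq> D}"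

definition roots :: "'a set set \<Rightarrow> 'a set set" where
  "roots F = {R \<in> F. \<forall>D\<in>F. R \<subseteq> D \<longrightarrow> D = R}"

lemma forestD:
  assumes "forest I F"
  shows "finite I" "\<And>C. C \<in> F \<Longrightarrow> C \<noteq> {}" "\<And>C. C \<in> F \<Longrightarrow> C \<subseteq> I"
    "\<And>i. i \<in> I \<Longrightarrow> {i} \<in> F"
    "\<And>C D. C \<in> F \<Longrightarrow> D \<in> F \<Longrightarrow> C \<subseteq> D \<or> D \<subseteq> C \<or> C \<inter> D = {}"
    "\<And>C. C \<in> F \<Longrightarrow> card C \<ge> 2 \<Longrightarrow> \<exists>C1\<in>F. \<exists>C2\<in>F. children C C1 C2"
  using assms unfolding forest_def by auto

lemma forest_finite_cluster: "forest I F \<Longrightarrow> C \<in> F \<Longrightarrow> finite C"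
  using forestD(1,3) finite_subset by metis

lemma forest_card_mono: "forest I F \<Longrightarrow> C \<in> F \<Longrightarrow> C' \<subseteq> C \<Longrightarrow> card C' \<le> card C"
  by (rule card_mono[OF forest_finite_cluster])

lemma forest_card_psubset: "forest I F \<Longrightarrow> C \<in> F \<Longrightarrow> C' \<subset> C \<Longrightarrow> card C' < card C"
  by (rule psubset_card_mono[OF forest_finite_cluster])

lemma forest_leaf:
  assumes "forest I F" "C \<in> F" "\<not> card C \<ge> 2"
  obtains i where "i \<in> I" "C = {i}"
proof -
  have "card C \<noteq> 0"
    using forestD(2)[OF assms(1,2)] forest_finite_cluster[OF assms(1,2)] by simp
  then have "card C = 1" using assms(3) by linarith
  then show ?thesis using that forestD(3)[OF assms(1,2)] by (auto simp: card_1_singleton_iff)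
qed

lemma card_ge_2I: "finite X \<Longrightarrow> a \<in> X \<Longrightarrow> b \<in> X \<Longrightarrow> a \<noteq> b \<Longrightarrow> card X \<ge> 2"
  using card_mono[of X "{a, b}"] by auto

lemma inner_iff: "C \<in> inner F \<longleftrightarrow> C \<in> F \<and> card C \<ge> 2"
  unfolding inner_def by simp

lemma forest_children:
  assumes "forest I F" "C \<in> inner F"
  obtains C1 C2 where "C1 \<in> F" "C2 \<in> F" "children C C1 C2"
  using assms(2) forestD(6)[OF assms(1)] unfolding inner_iff by blast

lemma children_sym: "children C C1 C2 \<Longrightarrow> children C C2 C1"
  unfolding children_def by blast

lemma children_psubset: "children C C1 C2 \<Longrightarrow> C1 \<subset> C \<and> C2 \<subset> C"
  unfolding children_def by blast

lemma children_inner: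
  assumes "forest I F" "C \<in> F" "children C C1 C2"
  shows "C \<in> inner F"
proof -
  obtain a b where "a \<in> C" "b \<in> C" "a \<noteq> b" using assms(3) unfolding children_def by blast
  then show ?thesis
    using card_ge_2I[OF forest_finite_cluster[OF assms(1,2)]] assms(2) unfolding inner_iff by blast
qed

lemma subset_child:
  assumes "forest I F" "children C C1 C2" "C1 \<in> F" "C2 \<in> F" "D \<in> F" "D \<subset> C"
  shows "D \<subseteq> C1 \<or> D \<subseteq> C2"
proof -
  have "C1 \<inter> C2 = {}" "C1 \<union> C2 = C" using assms(2) unfolding children_def by auto
  moreover have "D \<noteq> {}" using forestD(2)[OF assms(1,5)] .
  moreover have "D \<subseteq> C1 \<or> C1 \<subseteq> D \<or> D \<inter> C1 = {}" "D \<subseteq> C2 \<or> C2 \<subseteq> D \<or> D \<inter> C2 = {}"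
    using forestD(5)[OF assms(1) assms(5)] assms(3,4) by auto
  ultimately show ?thesis using assms(6) by blast
qed

lemma separated_by_children:
  assumes "forest I F" "children C C1 C2" "C1 \<in> F" "C2 \<in> F" "a \<in> F" "b \<in> F"
    "a \<subset> C" "b \<subset> C" "\<not> (\<exists>K\<in>F. K \<subset> C \<and> a \<union> b \<subseteq> K)"
  shows "(a \<subseteq> C1 \<and> b \<subseteq> C2) \<or> (a \<subseteq> C2 \<and> b \<subseteq> C1)"
proof -
  have "a \<subseteq> C1 \<or> a \<subseteq> C2" "b \<subseteq> C1 \<or> b \<subseteq> C2"
    using subset_child[OF assms(1-4)] assms(5-8) by auto
  moreover have "\<not> (a \<subseteq> C1 \<and> b \<subseteq> C1)" "\<not> (a \<subseteq> C2 \<and> b \<subseteq> C2)"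
    using assms(3,4,9) children_psubset[OF assms(2)] by blast+
  ultimately show ?thesis by blast
qed

lemma lca_lower: "D \<in> A \<Longrightarrow> C \<subseteq> D \<Longrightarrow> lca A C \<subseteq> D"
  unfolding lca_def by blast

lemma lca_upper: "C \<subseteq> lca A C"
  unfolding lca_def by blast

lemma lca_mono: "C \<subseteq> C' \<Longrightarrow> lca A C \<subseteq> lca A C'"
  unfolding lca_def by blast

lemma lca_cluster: "D \<in> A \<Longrightarrow> lca A D = D"
  unfolding lca_def by blast

lemma lca_image_inner: "lca A ` inner A = inner A"
proof -
  have "lca A C = C" if "C \<in> inner A" for C using lca_cluster that unfolding inner_iff by blast
  then show ?thesis by simp
qed

lemma lca_in:
  assumes "forest I A" "C \<noteq> {}" "D \<in> A" "C \<subseteq> D"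
  shows "lca A C \<in> A"
proof -
  obtain D0 where D0: "D0 \<in> A" "C \<subseteq> D0"
    and least: "\<And>D. D \<in> A \<Longrightarrow> C \<subseteq> D \<Longrightarrow> card D0 \<le> card D"
    using ex_has_least_nat[of "\<lambda>D. D \<in> A \<and> C \<subseteq> D" D card] assms(3,4) by blast
  have "D0 \<subseteq> D" if D: "D \<in> A" "C \<subseteq> D" for D
  proof -
    have "\<not> D \<subset> D0" using least[OF D] forest_card_psubset[OF assms(1) D0(1)] by (meson leD)
    moreover have "D0 \<inter> D \<noteq> {}" using D(2) D0(2) assms(2) by blast
    ultimately show ?thesis using forestD(5)[OF assms(1) D0(1) D(1)] by blast
  qed
  then have "lca A C = D0" using lca_lower[OF D0] unfolding lca_def by blast
  then show ?thesis using D0(1) by simp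
qed

lemma lca_in_inner:
  assumes "forest I A" "C \<noteq> {}" "D \<in> A" "C \<subseteq> D" "card C \<ge> 2"
  shows "lca A C \<in> inner A"
proof -
  have lca: "lca A C \<in> A" using lca_in[OF assms(1-4)] .
  moreover have "card C \<le> card (lca A C)" using forest_card_mono[OF assms(1) lca lca_upper] .
  ultimately show ?thesis using assms(5) unfolding inner_iff by simp
qed

lemma lca_eq_if_meets_children:
  assumes "forest I A" "u \<in> A" "children u u1 u2" "u1 \<in> A" "u2 \<in> A" "Z \<subseteq> u"
    "Z \<inter> u1 \<noteq> {}" "Z \<inter> u2 \<noteq> {}"
  shows "lca A Z = u"
proof (rule ccontr)
  have below: "lca A Z \<subseteq> u" using lca_lower[OF assms(2,6)] .
  assume "lca A Z \<noteq> u"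
  with below have "lca A Z \<subset> u" by blast
  moreover have "lca A Z \<in> A" using lca_in[OF assms(1) _ assms(2,6)] assms(7) by blast
  ultimately have "lca A Z \<subseteq> u1 \<or> lca A Z \<subseteq> u2" using subset_child[OF assms(1,3,4,5)] by blast
  then show False using lca_upper[of Z A] assms(3,7,8) unfolding children_def by blast
qed

lemma lca_meets_children:
  assumes "children u u1 u2" "u1 \<in> A" "u2 \<in> A" "lca A Z = u"
  shows "Z \<inter> u1 \<noteq> {}" "Z \<inter> u2 \<noteq> {}"
proof -
  have "Z \<subseteq> u" using lca_upper[of Z A] assms(4) by simp
  moreover have "\<not> Z \<subseteq> u1" using lca_lower[OF assms(2), of Z] assms(4) children_psubset[OF assms(1)] by blast
  moreover have "\<not> Z \<subseteq> u2" using lca_lower[OF assms(3), of Z] assms(4) children_psubset[OF assms(1)] by blast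
  ultimately show "Z \<inter> u1 \<noteq> {}" "Z \<inter> u2 \<noteq> {}" using assms(1) unfolding children_def by blast+
qed

lemma lca_of_disjoint_clusters:
  assumes A: "forest I A" and u: "u \<in> A" and v: "v \<in> A" and disj: "u \<inter> v = {}"
    and W: "W \<in> A" "u \<union> v \<subseteq> W"
  obtains z z1 z2 where "z \<in> A" "z1 \<in> A" "z2 \<in> A" "children z z1 z2" "u \<subseteq> z1" "v \<subseteq> z2"
proof -
  let ?z = "lca A (u \<union> v)"
  have ne: "u \<noteq> {}" "v \<noteq> {}" using forestD(2)[OF A] u v by blast+
  have z: "?z \<in> A" using lca_in[OF A _ W] ne by blast
  have uz: "u \<subset> ?z" and vz: "v \<subset> ?z" using lca_upper[of "u \<union> v" A] ne disj by blast+
  obtain a b where "a \<in> u" "b \<in> v" using ne by blast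
  moreover have "finite (u \<union> v)" using forest_finite_cluster[OF A W(1)] W(2) finite_subset by blast
  ultimately have "card (u \<union> v) \<ge> 2" using card_ge_2I[of "u \<union> v" a b] disj by blast
  then have "?z \<in> inner A" using lca_in_inner[OF A _ W] ne by blast
  then obtain z1 z2 where z12: "z1 \<in> A" "z2 \<in> A" "children ?z z1 z2" using forest_children[OF A] by blast
  have "\<not> u \<union> v \<subseteq> z1" "\<not> u \<union> v \<subseteq> z2"
    using lca_lower[OF z12(1), of "u \<union> v"] lca_lower[OF z12(2), of "u \<union> v"] children_psubset[OF z12(3)] by blast+
  moreover have "u \<subseteq> z1 \<or> u \<subseteq> z2" "v \<subseteq> z1 \<or> v \<subseteq> z2"
    using subset_child[OF A z12(3,1,2)] u v uz vz by blast+
  ultimately show ?thesis using that z z12 children_sym[OF z12(3)] by blast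
qed

lemma roots_exist:
  assumes "forest I F" "C \<in> F"
  obtains R where "R \<in> roots F" "C \<subseteq> R"
proof -
  obtain R where R: "R \<in> F" "C \<subseteq> R"
    and greatest: "\<And>D. D \<in> F \<Longrightarrow> C \<subseteq> D \<Longrightarrow> card I - card R \<le> card I - card D"
    using ex_has_least_nat[of "\<lambda>D. D \<in> F \<and> C \<subseteq> D" C "\<lambda>D. card I - card D"] assms(2) by blast
  have "D = R" if "D \<in> F" "R \<subseteq> D" for D
  proof -
    have "card D \<le> card I" using card_mono[OF forestD(1)[OF assms(1)] forestD(3)[OF assms(1) that(1)]] .
    moreover have "card I - card R \<le> card I - card D" using greatest that R(2) by blast
    moreover have "card R \<le> card D" using forest_card_mono[OF assms(1) that(1,2)] .
    ultimately have "card R = card D" by linarith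
    then show ?thesis using card_subset_eq[OF forest_finite_cluster[OF assms(1) that(1)] that(2)] by simp
  qed
  then have "R \<in> roots F" using R(1) unfolding roots_def by blast
  then show ?thesis using that R(2) by blast
qed

lemma roots_in: "R \<in> roots F \<Longrightarrow> R \<in> F"
  unfolding roots_def by blast

lemma root_maximal: "R \<in> roots F \<Longrightarrow> D \<in> F \<Longrightarrow> R \<subseteq> D \<Longrightarrow> D = R"
  unfolding roots_def by blast

lemma subset_root:
  assumes "forest I F" "R \<in> roots F" "C \<in> F" "C \<inter> R \<noteq> {}"
  shows "C \<subseteq> R"
proof -
  have "C \<subseteq> R \<or> R \<subseteq> C" using forestD(5)[OF assms(1) assms(3) roots_in[OF assms(2)]] assms(4) by blast
  then show ?thesis using root_maximal[OF assms(2,3)] by blast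
qed

lemma roots_eqI:
  assumes "forest I F" "R \<in> roots F" "R' \<in> roots F" "R \<inter> R' \<noteq> {}"
  shows "R = R'"
  using root_maximal[OF assms(2) roots_in[OF assms(3)]] subset_root[OF assms(1,3) roots_in[OF assms(2)] assms(4)]
  by blast

lemma partition_on_roots:
  assumes "forest I F"
  shows "partition_on I (roots F)"
proof (rule partition_onI)
  have "i \<in> \<Union> (roots F)" if "i \<in> I" for i
    using roots_exist[OF assms forestD(4)[OF assms that]] by blast
  then show "\<Union> (roots F) = I" using forestD(3)[OF assms] roots_in by blast
  show "disjnt p q" if "p \<in> roots F" "q \<in> roots F" "p \<noteq> q" for p q
    using roots_eqI[OF assms that(1,2)] that(3) by (auto simp: disjnt_def)
  show "{} \<notin> roots F" using forestD(2)[OF assms] roots_in by blast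
qed

section \<open>Forests below a forest\<close>

lemma forest_mapD:
  assumes "forest_map I F G phi"
  shows "\<And>C. C \<in> F \<Longrightarrow> phi C \<in> G" "\<And>i. i \<in> I \<Longrightarrow> phi {i} = {i}"
    "\<And>C. C \<in> inner F \<Longrightarrow> phi C \<in> inner G" "inj_on phi (inner F)"
    "\<And>C D. C \<in> F \<Longrightarrow> D \<in> F \<Longrightarrow> C \<subseteq> D \<Longrightarrow> phi C \<subseteq> phi D"
    "\<And>C C1 C2. C \<in> F \<Longrightarrow> C1 \<in> F \<Longrightarrow> C2 \<in> F \<Longrightarrow> children C C1 C2 \<Longrightarrow>
        phi C1 \<subset> phi C \<and> phi C2 \<subset> phi C \<and> \<not> (\<exists>K\<in>G. K \<subset> phi C \<and> phi C1 \<union> phi C2 \<subseteq> K)"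
  using assms unfolding forest_map_def by simp_all

lemma forest_mapI:
  assumes "\<And>C. C \<in> F \<Longrightarrow> phi C \<in> G" "\<And>i. i \<in> I \<Longrightarrow> phi {i} = {i}"
    "\<And>C. C \<in> inner F \<Longrightarrow> phi C \<in> inner G" "inj_on phi (inner F)"
    "\<And>C D. C \<in> F \<Longrightarrow> D \<in> F \<Longrightarrow> C \<subseteq> D \<Longrightarrow> phi C \<subseteq> phi D"
    "\<And>C C1 C2. C \<in> F \<Longrightarrow> C1 \<in> F \<Longrightarrow> C2 \<in> F \<Longrightarrow> children C C1 C2 \<Longrightarrow>
        phi C1 \<subset> phi C \<and> phi C2 \<subset> phi C \<and> \<not> (\<exists>K\<in>G. K \<subset> phi C \<and> phi C1 \<union> phi C2 \<subseteq> K)"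
  shows "forest_map I F G phi"
  unfolding forest_map_def using assms by simp

lemma forest_map_eq_lca:
  assumes F: "forest I F" and G: "forest I G" and phi: "forest_map I F G phi"
  shows "C \<in> F \<Longrightarrow> phi C = lca G C"
proof (induction "card C" arbitrary: C rule: less_induct)
  case (less C)
  show ?case
  proof (cases "card C \<ge> 2")
    case False
    then obtain i where "i \<in> I" "C = {i}" using forest_leaf[OF F less.prems] by blast
    then show ?thesis using forest_mapD(2)[OF phi] lca_cluster[OF forestD(4)[OF G]] by simp
  next
    case True
    then obtain C1 C2 where C12: "C1 \<in> F" "C2 \<in> F" "children C C1 C2"
      using forestD(6)[OF F less.prems] by blast
    have IH: "phi C1 = lca G C1" "phi C2 = lca G C2"
      using less.hyps[OF forest_card_psubset[OF F less.prems]] C12 children_psubset[OF C12(3)] by auto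
    have map: "phi C1 \<subset> phi C" "phi C2 \<subset> phi C" "\<not> (\<exists>K\<in>G. K \<subset> phi C \<and> phi C1 \<union> phi C2 \<subseteq> K)"
      using forest_mapD(6)[OF phi less.prems C12] by blast+
    have C: "C = C1 \<union> C2" using C12(3) unfolding children_def by blast
    have "C \<subseteq> phi C" using C map(1,2) IH lca_upper[of C1 G] lca_upper[of C2 G] by blast
    moreover have "phi C \<in> G" using forest_mapD(1)[OF phi less.prems] .
    ultimately have "lca G C \<subseteq> phi C" and "lca G C \<in> G"
      using lca_lower lca_in[OF G forestD(2)[OF F less.prems]] by blast+
    moreover have "phi C1 \<union> phi C2 \<subseteq> lca G C"
      using IH C lca_mono[of C1 C G] lca_mono[of C2 C G] by blast
    ultimately show ?thesis using map(3) by blast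
  qed
qed

lemma forest_leD:
  assumes "forest_le I F A"
  shows "forest I F" "forest I A" "forest_map I F A (lca A)"
proof -
  show F: "forest I F" and A: "forest I A" using assms unfolding forest_le_def by auto
  obtain phi where phi: "forest_map I F A phi" using assms unfolding forest_le_def by blast
  have eq: "phi C = lca A C" if "C \<in> F" for C using forest_map_eq_lca[OF F A phi that] .
  have inner_eq: "C \<in> inner F \<Longrightarrow> phi C = lca A C" for C using eq unfolding inner_iff by blast
  show "forest_map I F A (lca A)"
  proof (rule forest_mapI)
    show "inj_on (lca A) (inner F)" using forest_mapD(4)[OF phi] inj_on_cong[of "inner F" phi "lca A"] inner_eq by simp
    show "lca A C \<in> A" if "C \<in> F" for C using forest_mapD(1)[OF phi that] eq[OF that] by simp
    show "lca A {i} = {i}" if "i \<in> I" for i using lca_cluster[OF forestD(4)[OF A that]] .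
    show "lca A C \<in> inner A" if "C \<in> inner F" for C
      using forest_mapD(3)[OF phi that] inner_eq[OF that] by simp
    show "lca A C \<subseteq> lca A D" if "C \<subseteq> D" for C D using lca_mono[OF that] .
    show "lca A C1 \<subset> lca A C \<and> lca A C2 \<subset> lca A C \<and>
        \<not> (\<exists>K\<in>A. K \<subset> lca A C \<and> lca A C1 \<union> lca A C2 \<subseteq> K)"
      if "C \<in> F" "C1 \<in> F" "C2 \<in> F" "children C C1 C2" for C C1 C2
      using forest_mapD(6)[OF phi that] eq[OF that(1)] eq[OF that(2)] eq[OF that(3)] by simp
  qed
qed

lemma vT_eq_lca_image:
  assumes "forest_le I F T"
  shows "vT I T F = lca T ` inner F"
proof -
  have "\<exists>phi. forest_map I F T phi" using assms unfolding forest_le_def by blast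
  then have "forest_map I F T (SOME phi. forest_map I F T phi)" by (rule someI_ex)
  then show ?thesis
    unfolding vT_def using forest_map_eq_lca[OF forest_leD(1,2)[OF assms]]
    by (intro image_cong) (auto simp: inner_iff)
qed

lemma forest_leI:
  assumes F: "forest I F" and A: "forest I A"
    and refines: "\<And>C. C \<in> F \<Longrightarrow> \<exists>D\<in>A. C \<subseteq> D"
    and inj: "inj_on (lca A) (inner F)"
    and strict: "\<And>C C1 C2. C \<in> F \<Longrightarrow> C1 \<in> F \<Longrightarrow> C2 \<in> F \<Longrightarrow> children C C1 C2 \<Longrightarrow>
                lca A C1 \<noteq> lca A C \<and> lca A C2 \<noteq> lca A C"
  shows "forest_le I F A"
proof -
  have "forest_map I F A (lca A)"
  proof (rule forest_mapI)
    show "lca A C \<in> A" if "C \<in> F" for C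
      using refines[OF that] lca_in[OF A forestD(2)[OF F that]] by blast
    show "lca A {i} = {i}" if "i \<in> I" for i using lca_cluster[OF forestD(4)[OF A that]] .
    show "lca A C \<in> inner A" if "C \<in> inner F" for C
      using that refines lca_in_inner[OF A forestD(2)[OF F]] unfolding inner_iff by blast
    show "inj_on (lca A) (inner F)" by (rule inj)
    show "lca A C \<subseteq> lca A D" if "C \<subseteq> D" for C D using lca_mono[OF that] .
    fix C C1 C2 assume C: "C \<in> F" "C1 \<in> F" "C2 \<in> F" "children C C1 C2"
    have "C = C1 \<union> C2" using C(4) unfolding children_def by blast
    then have "lca A C1 \<subseteq> lca A C" "lca A C2 \<subseteq> lca A C"
      and "K \<in> A \<Longrightarrow> lca A C1 \<union> lca A C2 \<subseteq> K \<Longrightarrow> lca A C \<subseteq> K" for K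
      using lca_mono[of C1 C A] lca_mono[of C2 C A] lca_lower[of K A C] lca_upper[of C1 A] lca_upper[of C2 A]
      by blast+
    then show "lca A C1 \<subset> lca A C \<and> lca A C2 \<subset> lca A C \<and>
        \<not> (\<exists>K\<in>A. K \<subset> lca A C \<and> lca A C1 \<union> lca A C2 \<subseteq> K)"
      using strict[OF C] by blast
  qed
  then show ?thesis using F A unfolding forest_le_def by blast
qed

lemma forest_le_children_separated:
  assumes le: "forest_le I F A" and X: "X \<in> F" "children X X1 X2" "X1 \<in> F" "X2 \<in> F"
    and x: "children (lca A X) x1 x2" "x1 \<in> A" "x2 \<in> A"
  shows "(lca A X1 \<subseteq> x1 \<and> lca A X2 \<subseteq> x2) \<or> (lca A X1 \<subseteq> x2 \<and> lca A X2 \<subseteq> x1)"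
proof -
  note map = forest_leD(3)[OF le]
  show ?thesis
    using separated_by_children[OF forest_leD(2)[OF le] x forest_mapD(1)[OF map X(3)] forest_mapD(1)[OF map X(4)]]
      forest_mapD(6)[OF map X(1,3,4,2)] by blast
qed

lemma forest_le_Int:
  assumes le: "forest_le I F A"
  shows "X \<in> F \<Longrightarrow> w \<in> A \<Longrightarrow> w \<inter> X \<noteq> {} \<Longrightarrow> w \<inter> X \<in> F"
proof (induction "card X" arbitrary: X rule: less_induct)
  case (less X)
  note F = forest_leD(1)[OF le] and A = forest_leD(2)[OF le] and map = forest_leD(3)[OF le]
  show ?case
  proof (cases "X \<subseteq> w")
    case True
    then show ?thesis using less.prems(1) by (simp add: Int_absorb1)
  next
    case False
    have "card X \<ge> 2"
    proof (rule ccontr)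
      assume "\<not> card X \<ge> 2"
      then obtain i where "X = {i}" using forest_leaf[OF F less.prems(1)] by blast
      then show False using False less.prems(3) by blast
    qed
    then have "X \<in> inner F" using less.prems(1) unfolding inner_iff by blast
    then obtain X1 X2 where X12: "X1 \<in> F" "X2 \<in> F" "children X X1 X2" using forest_children[OF F] by blast
    have "lca A X \<in> inner A" using forest_mapD(3)[OF map \<open>X \<in> inner F\<close>] .
    then obtain x1 x2 where x12: "x1 \<in> A" "x2 \<in> A" "children (lca A X) x1 x2"
      using forest_children[OF A] by blast
    have "(lca A X1 \<subseteq> x1 \<and> lca A X2 \<subseteq> x2) \<or> (lca A X1 \<subseteq> x2 \<and> lca A X2 \<subseteq> x1)"
      using forest_le_children_separated[OF le less.prems(1) X12(3,1,2) x12(3,1,2)] .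
    moreover have "w \<subset> lca A X"
    proof -
      have "w \<inter> lca A X \<noteq> {}" using less.prems(3) lca_upper[of X A] by blast
      moreover have "\<not> lca A X \<subseteq> w" using False lca_upper[of X A] by blast
      ultimately show ?thesis using forestD(5)[OF A less.prems(2) forest_mapD(1)[OF map less.prems(1)]] by blast
    qed
    then have "w \<subseteq> x1 \<or> w \<subseteq> x2"
      using subset_child[OF A x12(3,1,2) less.prems(2)] by blast
    moreover have "x1 \<inter> x2 = {}" "X = X1 \<union> X2" using x12(3) X12(3) unfolding children_def by blast+
    ultimately have "w \<inter> X = w \<inter> X1 \<or> w \<inter> X = w \<inter> X2"
      using lca_upper[of X1 A] lca_upper[of X2 A] by blast
    moreover have "card X1 < card X" "card X2 < card X"
      using forest_card_psubset[OF F less.prems(1)] children_psubset[OF X12(3)] by blast+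
    ultimately show ?thesis using less.hyps[OF _ X12(1) less.prems(2)] less.hyps[OF _ X12(2) less.prems(2)]
      less.prems(3) by fastforce
  qed
qed

lemma lca_Int_eq:
  assumes le: "forest_le I F A" and C: "C \<in> F" and D: "D \<in> F" "C \<subseteq> D"
  shows "lca A C \<inter> D = C"
proof (cases "C \<in> inner F")
  case True
  note F = forest_leD(1)[OF le] and map = forest_leD(3)[OF le]
  have CZ: "C \<subseteq> lca A C \<inter> D" using D(2) lca_upper[of C A] by blast
  moreover have "C \<noteq> {}" using forestD(2)[OF F C] .
  ultimately have "lca A C \<inter> D \<in> F" using forest_le_Int[OF le D(1) forest_mapD(1)[OF map C]] by blast
  then have Z: "lca A C \<inter> D \<in> inner F"
    using forest_card_mono[OF F _ CZ] True unfolding inner_iff by fastforce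
  have "lca A (lca A C \<inter> D) = lca A C"
    using lca_lower[OF forest_mapD(1)[OF map C], of "lca A C \<inter> D"] lca_mono[OF CZ] by blast
  then show ?thesis using inj_onD[OF forest_mapD(4)[OF map] _ Z True] by simp
next
  case False
  then obtain i where "C = {i}" "i \<in> I" using forest_leaf[OF forest_leD(1)[OF le] C] C unfolding inner_iff by blast
  then show ?thesis using lca_cluster[OF forestD(4)[OF forest_leD(2)[OF le]]] D(2) by auto
qed

lemma lca_lca:
  assumes le: "forest_le I G A" and "C \<noteq> {}" "D \<in> G" "C \<subseteq> D"
  shows "lca A (lca G C) = lca A C"
proof -
  note G = forest_leD(1)[OF le] and A = forest_leD(2)[OF le] and map = forest_leD(3)[OF le]
  have "C \<subseteq> lca A D" using assms(4) lca_upper[of D A] by blast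
  then have a: "lca A C \<in> A" using lca_in[OF A assms(2) forest_mapD(1)[OF map assms(3)]] by blast
  have "lca A C \<inter> D \<in> G"
    using forest_le_Int[OF le assms(3) a] assms(2,4) lca_upper[of C A] by blast
  then have "lca G C \<subseteq> lca A C"
    using lca_lower[of "lca A C \<inter> D" G C] assms(4) lca_upper[of C A] by blast
  then show ?thesis using lca_lower[OF a] lca_mono[OF lca_upper[of C G], of A] by blast
qed

lemma forest_le_if_refines:
  assumes F: "forest_le I F A" and G: "forest_le I G A" and refines: "\<And>C. C \<in> F \<Longrightarrow> \<exists>D\<in>G. C \<subseteq> D"
  shows "forest_le I F G"
proof -
  note map = forest_leD(3)[OF F]
  have comp: "lca A (lca G C) = lca A C" if "C \<in> F" for C
    using refines[OF that] lca_lca[OF G forestD(2)[OF forest_leD(1)[OF F] that]] by blast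
  show ?thesis
  proof (rule forest_leI[OF forest_leD(1)[OF F] forest_leD(1)[OF G] refines])
    show "inj_on (lca G) (inner F)"
    proof (rule inj_onI)
      fix C C' assume C: "C \<in> inner F" "C' \<in> inner F" "lca G C = lca G C'"
      then have "lca A C = lca A C'" using comp unfolding inner_iff by metis
      then show "C = C'" using inj_onD[OF forest_mapD(4)[OF map] _ C(1,2)] by blast
    qed
    fix C C1 C2 assume C: "C \<in> F" "C1 \<in> F" "C2 \<in> F" "children C C1 C2"
    show "lca G C1 \<noteq> lca G C \<and> lca G C2 \<noteq> lca G C"
      using forest_mapD(6)[OF map C] comp[OF C(1)] comp[OF C(2)] comp[OF C(3)] by force
  qed
qed

lemma forest_le_refl:
  assumes "forest I A"
  shows "forest_le I A A"
proof (rule forest_leI[OF assms assms])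
  show "inj_on (lca A) (inner A)" by (rule inj_onI) (simp add: inner_iff lca_cluster)
  fix C C1 C2 assume C: "C \<in> A" "C1 \<in> A" "C2 \<in> A" "children C C1 C2"
  then show "lca A C1 \<noteq> lca A C \<and> lca A C2 \<noteq> lca A C"
    using lca_cluster[OF C(1)] lca_cluster[OF C(2)] lca_cluster[OF C(3)] children_psubset[OF C(4)] by auto
qed blast

section \<open>Restriction to a partition of the leaves\<close>

definition restriction :: "'a set set \<Rightarrow> 'a set set \<Rightarrow> 'a set set" where
  "restriction A Q = {w \<inter> q | w q. w \<in> A \<and> q \<in> Q \<and> w \<inter> q \<noteq> {}}"

lemma partition_on_eqI: "partition_on I P \<Longrightarrow> p \<in> P \<Longrightarrow> q \<in> P \<Longrightarrow> p \<inter> q \<noteq> {} \<Longrightarrow> p = q"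
  by (meson disjointD partition_onD2)

lemma partition_on_nonempty: "partition_on I P \<Longrightarrow> p \<in> P \<Longrightarrow> p \<noteq> {}"
  using partition_onD3 by metis

lemma restrictionE:
  assumes "C \<in> restriction A Q"
  obtains w q where "w \<in> A" "q \<in> Q" "w \<inter> q \<noteq> {}" "C = w \<inter> q"
  using assms unfolding restriction_def by blast

lemma restrictionI: "w \<in> A \<Longrightarrow> q \<in> Q \<Longrightarrow> w \<inter> q \<noteq> {} \<Longrightarrow> w \<inter> q \<in> restriction A Q"
  unfolding restriction_def by blast

lemma restriction_block: "C \<in> restriction A Q \<Longrightarrow> \<exists>q\<in>Q. C \<subseteq> q"
  by (erule restrictionE) blast

lemma lca_Int_block:
  assumes Q: "partition_on I Q" and C: "C \<in> restriction A Q" and q: "q \<in> Q" "C \<subseteq> q"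
  shows "lca A C \<inter> q = C"
proof -
  obtain w q' where w: "w \<in> A" "q' \<in> Q" "C = w \<inter> q'" "C \<noteq> {}" using C by (rule restrictionE) blast
  then have "q' = q" using partition_on_eqI[OF Q w(2) q(1)] q(2) by blast
  then show ?thesis using lca_lower[OF w(1), of C] lca_upper[of C A] w(3) q(2) by blast
qed

lemma restriction_children:
  assumes A: "forest I A" and Q: "partition_on I Q" and C: "C \<in> restriction A Q" "card C \<ge> 2"
  shows "\<exists>C1\<in>restriction A Q. \<exists>C2\<in>restriction A Q. children C C1 C2"
proof -
  obtain w q where w: "w \<in> A" "q \<in> Q" "C = w \<inter> q" "C \<noteq> {}" using C(1) by (rule restrictionE) blast
  then have "lca A C \<in> inner A" using lca_in_inner[OF A _ w(1) _ C(2)] by blast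
  then obtain u1 u2 where u: "u1 \<in> A" "u2 \<in> A" "children (lca A C) u1 u2"
    using forest_children[OF A] by blast
  have meets: "C \<inter> u1 \<noteq> {}" "C \<inter> u2 \<noteq> {}" using lca_meets_children[OF u(3,1,2) refl] by auto
  have "lca A C \<inter> q = C" using lca_Int_block[OF Q C(1) w(2)] w(3) by blast
  then have "children C (u1 \<inter> q) (u2 \<inter> q)"
    using u(3) meets unfolding children_def by blast
  moreover have "u1 \<inter> q \<in> restriction A Q" "u2 \<inter> q \<in> restriction A Q"
    using restrictionI[OF u(1) w(2)] restrictionI[OF u(2) w(2)] meets w(3) by blast+
  ultimately show ?thesis by blast
qed

lemma forest_restriction:
  assumes A: "forest I A" and Q: "partition_on I Q"
  shows "forest I (restriction A Q)"
proof -
  have "C \<noteq> {} \<and> C \<subseteq> I" if "C \<in> restriction A Q" for C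
    using that by (rule restrictionE) (use forestD(3)[OF A] in blast)
  moreover have "{i} \<in> restriction A Q" if i: "i \<in> I" for i
  proof -
    obtain q where q: "q \<in> Q" "i \<in> q" using partition_onD1[OF Q] i by blast
    then show ?thesis using restrictionI[OF forestD(4)[OF A i] q(1)] by (simp add: Int_absorb2)
  qed
  moreover have "C \<subseteq> D \<or> D \<subseteq> C \<or> C \<inter> D = {}"
    if C: "C \<in> restriction A Q" and D: "D \<in> restriction A Q" for C D
  proof -
    obtain w q where wq: "w \<in> A" "q \<in> Q" "C = w \<inter> q" using C by (rule restrictionE)
    obtain w' q' where wq': "w' \<in> A" "q' \<in> Q" "D = w' \<inter> q'" using D by (rule restrictionE)
    show ?thesis
    proof (cases "q = q'")
      case True
      then show ?thesis using forestD(5)[OF A wq(1) wq'(1)] wq(3) wq'(3) by blast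
    next
      case False
      then show ?thesis using partition_on_eqI[OF Q wq(2) wq'(2)] wq(3) wq'(3) by blast
    qed
  qed
  ultimately show ?thesis
    using forestD(1)[OF A] restriction_children[OF A Q] unfolding forest_def by blast
qed

lemma roots_restriction:
  assumes Q: "partition_on I Q" and covered: "\<And>q. q \<in> Q \<Longrightarrow> \<exists>D\<in>A. q \<subseteq> D"
  shows "roots (restriction A Q) = Q"
proof -
  have in_restriction: "q \<in> restriction A Q" if q: "q \<in> Q" for q
  proof -
    obtain D where D: "D \<in> A" "q \<subseteq> D" using covered[OF q] by blast
    then have "D \<inter> q = q" "D \<inter> q \<noteq> {}" using partition_on_nonempty[OF Q q] by blast+
    then show ?thesis using restrictionI[OF D(1) q] by simp
  qed
  have maximal: "D = q" if q: "q \<in> Q" and D: "D \<in> restriction A Q" "q \<subseteq> D" for q D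
  proof -
    obtain q' where q': "q' \<in> Q" "D \<subseteq> q'" using restriction_block[OF D(1)] by blast
    then have "q' = q" using partition_on_eqI[OF Q q'(1) q] partition_on_nonempty[OF Q q] D(2) by blast
    then show ?thesis using q' D(2) by blast
  qed
  show ?thesis
  proof
    show "roots (restriction A Q) \<subseteq> Q"
    proof
      fix R assume R: "R \<in> roots (restriction A Q)"
      obtain q where q: "q \<in> Q" "R \<subseteq> q" using restriction_block[OF roots_in[OF R]] by blast
      then have "q = R" using root_maximal[OF R in_restriction[OF q(1)]] by blast
      then show "R \<in> Q" using q(1) by simp
    qed
    show "Q \<subseteq> roots (restriction A Q)"
      unfolding roots_def using in_restriction maximal by blast
  qed
qed

lemma forest_le_restriction:
  assumes A: "forest I A" and Q: "partition_on I Q" and inj: "inj_on (lca A) (inner (restriction A Q))"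
  shows "forest_le I (restriction A Q) A"
proof (rule forest_leI[OF forest_restriction[OF A Q] A _ inj])
  show "\<exists>D\<in>A. C \<subseteq> D" if "C \<in> restriction A Q" for C
    using that by (rule restrictionE) blast
  have strict: "lca A C1 \<noteq> lca A C"
    if C: "C \<in> restriction A Q" "C1 \<in> restriction A Q" "children C C1 C2" for C C1 C2
  proof
    assume eq: "lca A C1 = lca A C"
    obtain q where q: "q \<in> Q" "C \<subseteq> q" using restriction_block[OF C(1)] by blast
    then have "C1 \<subseteq> q" using children_psubset[OF C(3)] by blast
    then have "C1 = lca A C1 \<inter> q" using lca_Int_block[OF Q C(2) q(1)] by simp
    also have "\<dots> = C" using lca_Int_block[OF Q C(1) q] eq by simp
    finally have "C1 = C" .
    then show False using children_psubset[OF C(3)] by blast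
  qed
  fix C C1 C2 assume C: "C \<in> restriction A Q" "C1 \<in> restriction A Q" "C2 \<in> restriction A Q" "children C C1 C2"
  show "lca A C1 \<noteq> lca A C \<and> lca A C2 \<noteq> lca A C"
    using strict[OF C(1,2,4)] strict[OF C(1,3) children_sym[OF C(4)]] by blast
qed

lemma restriction_roots_eq:
  assumes le: "forest_le I F A"
  shows "restriction A (roots F) = F"
proof
  note F = forest_leD(1)[OF le] and map = forest_leD(3)[OF le]
  show "restriction A (roots F) \<subseteq> F"
    using forest_le_Int[OF le roots_in] by (auto elim!: restrictionE)
  show "F \<subseteq> restriction A (roots F)"
  proof
    fix C assume C: "C \<in> F"
    then obtain R where R: "R \<in> roots F" "C \<subseteq> R" using roots_exist[OF F] by blast
    then have "C = lca A C \<inter> R" using lca_Int_eq[OF le C roots_in[OF R(1)]] by simp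
    then show "C \<in> restriction A (roots F)"
      using restrictionI[OF forest_mapD(1)[OF map C] R(1)] forestD(2)[OF F C] by simp
  qed
qed

lemma forest_le_eq_if_roots_eq:
  assumes "forest_le I F A" "forest_le I G A" "roots F = roots G"
  shows "F = G"
proof -
  have "F = restriction A (roots F)" using restriction_roots_eq[OF assms(1)] by simp
  also have "\<dots> = G" using restriction_roots_eq[OF assms(2)] assms(3) by simp
  finally show ?thesis .
qed

section \<open>Vertices split by a tree\<close>

text \<open>For u \<in> A, the trace u \<inter> R has least common ancestor u exactly when R meets both
  children of u (lemmas splitsI and splits_children).\<close>
definition splits :: "'a set set \<Rightarrow> 'a set \<Rightarrow> 'a set \<Rightarrow> bool" where
  "splits A u R \<longleftrightarrow> u \<inter> R \<noteq> {} \<and> lca A (u \<inter> R) = u"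

lemma splitsI:
  assumes "forest I A" "u \<in> A" "children u u1 u2" "u1 \<in> A" "u2 \<in> A" "R \<inter> u1 \<noteq> {}" "R \<inter> u2 \<noteq> {}"
  shows "splits A u R"
proof -
  have "u1 \<subseteq> u" "u2 \<subseteq> u" using children_psubset[OF assms(3)] by blast+
  then have "(u \<inter> R) \<inter> u1 \<noteq> {}" "(u \<inter> R) \<inter> u2 \<noteq> {}" using assms(6,7) by blast+
  then show ?thesis
    unfolding splits_def using lca_eq_if_meets_children[OF assms(1-5), of "u \<inter> R"] by blast
qed

lemma splits_children:
  assumes "splits A u R" "children u u1 u2" "u1 \<in> A" "u2 \<in> A"
  shows "R \<inter> u1 \<noteq> {}" "R \<inter> u2 \<noteq> {}"
  using lca_meets_children[OF assms(2-4), of "u \<inter> R"] assms(1) unfolding splits_def by blast+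

lemma splits_mono:
  assumes "splits A u R" "u \<in> A" "R \<subseteq> R'"
  shows "splits A u R'"
proof -
  have "lca A (u \<inter> R) \<subseteq> lca A (u \<inter> R')" using lca_mono[of "u \<inter> R" "u \<inter> R'"] assms(3) by blast
  moreover have "lca A (u \<inter> R') \<subseteq> u" using lca_lower[OF assms(2)] by blast
  ultimately show ?thesis using assms(1,3) unfolding splits_def by blast
qed

lemma inner_restrictionE:
  assumes A: "forest I A" and Q: "partition_on I Q" and X: "X \<in> inner (restriction A Q)"
  obtains q where "q \<in> Q" "lca A X \<in> inner A" "splits A (lca A X) q" "X = lca A X \<inter> q"
proof -
  obtain w q where w: "w \<in> A" "q \<in> Q" "X = w \<inter> q" "X \<noteq> {}"
    using X unfolding inner_iff by (blast elim: restrictionE)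
  have "lca A X \<in> inner A" using lca_in_inner[OF A w(4,1)] w(3) X unfolding inner_iff by blast
  moreover have "lca A X \<inter> q = X" using lca_Int_block[OF Q _ w(2)] X w(3) unfolding inner_iff by blast
  ultimately show ?thesis using that w(2,4) unfolding splits_def by simp
qed

lemma inner_restrictionI:
  assumes A: "forest I A" and u: "u \<in> inner A" and q: "q \<in> Q" "splits A u q"
  shows "u \<inter> q \<in> inner (restriction A Q)"
proof -
  obtain u1 u2 where u12: "u1 \<in> A" "u2 \<in> A" "children u u1 u2" using forest_children[OF A u] by blast
  obtain a b where ab: "a \<in> u \<inter> q \<inter> u1" "b \<in> u \<inter> q \<inter> u2"
    using splits_children[OF q(2) u12(3,1,2)] children_psubset[OF u12(3)] by blast
  moreover have "a \<noteq> b" using ab u12(3) unfolding children_def by blast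
  moreover have "u \<in> A" using u unfolding inner_iff by blast
  ultimately show ?thesis
    using card_ge_2I[of "u \<inter> q" a b] forest_finite_cluster[OF A] restrictionI[of u A q Q] q
    unfolding inner_iff splits_def by blast
qed

lemma lca_image_restriction:
  assumes A: "forest I A" and Q: "partition_on I Q"
  shows "lca A ` inner (restriction A Q) = {u \<in> inner A. \<exists>q\<in>Q. splits A u q}"
proof
  show "lca A ` inner (restriction A Q) \<subseteq> {u \<in> inner A. \<exists>q\<in>Q. splits A u q}"
    using inner_restrictionE[OF A Q] by blast
  show "{u \<in> inner A. \<exists>q\<in>Q. splits A u q} \<subseteq> lca A ` inner (restriction A Q)"
    using inner_restrictionI[OF A] unfolding splits_def by blast
qed

lemma inj_on_lca_restriction:
  assumes A: "forest I A" and Q: "partition_on I Q"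
    and unique: "\<And>u q q'. u \<in> inner A \<Longrightarrow> q \<in> Q \<Longrightarrow> q' \<in> Q \<Longrightarrow> splits A u q \<Longrightarrow> splits A u q' \<Longrightarrow> q = q'"
  shows "inj_on (lca A) (inner (restriction A Q))"
proof (rule inj_onI)
  fix X X' assume X: "X \<in> inner (restriction A Q)" and X': "X' \<in> inner (restriction A Q)"
    and eq: "lca A X = lca A X'"
  obtain q where q: "q \<in> Q" "lca A X \<in> inner A" "splits A (lca A X) q" "X = lca A X \<inter> q"
    using inner_restrictionE[OF A Q X] by blast
  obtain q' where q': "q' \<in> Q" "splits A (lca A X') q'" "X' = lca A X' \<inter> q'"
    using inner_restrictionE[OF A Q X'] by blast
  have "q = q'" using unique[OF q(2) q(1) q'(1) q(3)] q'(2) eq by simp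
  then show "X = X'" using q(4) q'(3) eq by simp
qed

lemma splits_unique:
  assumes le: "forest_le I F A" and u: "u \<in> inner A"
    and R: "R \<in> roots F" "splits A u R" and R': "R' \<in> roots F" "splits A u R'"
  shows "R = R'"
proof -
  note F = forest_leD(1)[OF le] and A = forest_leD(2)[OF le] and map = forest_leD(3)[OF le]
  have "restriction A (roots F) = F" by (rule restriction_roots_eq[OF le])
  then have "u \<inter> R \<in> inner F" "u \<inter> R' \<in> inner F"
    using inner_restrictionI[OF A u] R R' by metis+
  moreover have "lca A (u \<inter> R) = lca A (u \<inter> R')" using R(2) R'(2) unfolding splits_def by simp
  ultimately have "u \<inter> R = u \<inter> R'" using inj_onD[OF forest_mapD(4)[OF map]] by blast
  then show ?thesis using roots_eqI[OF F R(1) R'(1)] R(2) unfolding splits_def by blast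
qed

lemma lca_image_eq_splits:
  assumes le: "forest_le I F A"
  shows "lca A ` inner F = {u \<in> inner A. \<exists>R\<in>roots F. splits A u R}"
  using lca_image_restriction[OF forest_leD(2)[OF le] partition_on_roots[OF forest_leD(1)[OF le]]]
    restriction_roots_eq[OF le] by simp

lemma subset_root_if_all_split:
  assumes le: "forest_le I F A" and split: "\<And>u. u \<in> inner A \<Longrightarrow> \<exists>R\<in>roots F. splits A u R"
  shows "w \<in> A \<Longrightarrow> \<exists>R\<in>roots F. w \<subseteq> R"
proof (induction "card w" arbitrary: w rule: less_induct)
  case (less w)
  note F = forest_leD(1)[OF le] and A = forest_leD(2)[OF le]
  show ?case
  proof (cases "w \<in> inner A")
    case False
    then obtain i where i: "i \<in> I" "w = {i}" using forest_leaf[OF A less.prems] less.prems unfolding inner_iff by blast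
    obtain R where "R \<in> roots F" "{i} \<subseteq> R" using roots_exist[OF F forestD(4)[OF F i(1)]] .
    then show ?thesis using i(2) by blast
  next
    case True
    obtain w1 w2 where w12: "w1 \<in> A" "w2 \<in> A" "children w w1 w2" using forest_children[OF A True] by blast
    obtain R where R: "R \<in> roots F" "splits A w R" using split[OF True] by blast
    have "card w1 < card w" "card w2 < card w"
      using forest_card_psubset[OF A less.prems] children_psubset[OF w12(3)] by blast+
    then obtain R1 R2 where "R1 \<in> roots F" "w1 \<subseteq> R1" "R2 \<in> roots F" "w2 \<subseteq> R2"
      using less.hyps[OF _ w12(1)] less.hyps[OF _ w12(2)] by blast
    moreover have "R \<inter> w1 \<noteq> {}" "R \<inter> w2 \<noteq> {}" using splits_children[OF R(2) w12(3,1,2)] by blast+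
    ultimately have "w1 \<subseteq> R" "w2 \<subseteq> R" using roots_eqI[OF F R(1)] by blast+
    then show ?thesis using R(1) w12(3) unfolding children_def by blast
  qed
qed

lemma roots_eq_if_clusters_in_roots:
  assumes le: "forest_le I F A" and in_root: "\<And>w. w \<in> A \<Longrightarrow> \<exists>R\<in>roots F. w \<subseteq> R"
  shows "roots F = roots A"
proof -
  note F = forest_leD(1)[OF le] and map = forest_leD(3)[OF le]
  have sub: "roots F \<subseteq> roots A"
  proof
    fix R assume R: "R \<in> roots F"
    have R_le: "R \<subseteq> lca A R" and R_ne: "R \<noteq> {}" using lca_upper forestD(2)[OF F roots_in[OF R]] .
    have lcaA: "lca A R \<in> A" using forest_mapD(1)[OF map roots_in[OF R]] .
    then obtain R' where R': "R' \<in> roots F" "lca A R \<subseteq> R'" using in_root by blast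
    then have "R' = R" using roots_eqI[OF F R'(1) R] R_le R_ne by blast
    then have "lca A R = R" using R'(2) R_le by blast
    moreover have "D = R" if D: "D \<in> A" "R \<subseteq> D" for D
    proof -
      obtain R'' where R'': "R'' \<in> roots F" "D \<subseteq> R''" using in_root[OF D(1)] by blast
      then have "R = R''" using roots_eqI[OF F R R''(1)] D(2) R_ne by blast
      then show ?thesis using R''(2) D(2) by blast
    qed
    ultimately show "R \<in> roots A" using lcaA unfolding roots_def by auto
  qed
  moreover have "roots A \<subseteq> roots F"
  proof
    fix W assume W: "W \<in> roots A"
    obtain R where R: "R \<in> roots F" "W \<subseteq> R" using in_root[OF roots_in[OF W]] by blast
    then have "R = W" using root_maximal[OF W roots_in] sub by blast
    then show "W \<in> roots F" using R(1) by simp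
  qed
  ultimately show ?thesis by blast
qed

lemma forest_le_eq_if_same_vertices:
  assumes le: "forest_le I F A" and vertices: "inner A \<subseteq> lca A ` inner F"
  shows "F = A"
proof -
  have "\<exists>R\<in>roots F. w \<subseteq> R" if "w \<in> A" for w
    using subset_root_if_all_split[OF le _ that] vertices lca_image_eq_splits[OF le] by blast
  then have "roots F = roots A" by (rule roots_eq_if_clusters_in_roots[OF le])
  then show ?thesis using forest_le_eq_if_roots_eq[OF le forest_le_refl[OF forest_leD(2)[OF le]]] by blast
qed

lemma mem_if_vertices_below:
  assumes le: "forest_le I F A"
    and below: "\<And>u. u \<in> inner A \<Longrightarrow> u \<subset> v \<Longrightarrow> u \<in> lca A ` inner F"
  shows "u \<in> A \<Longrightarrow> u \<subset> v \<Longrightarrow> u \<in> F"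
proof (induction "card u" arbitrary: u rule: less_induct)
  case (less u)
  note F = forest_leD(1)[OF le] and A = forest_leD(2)[OF le]
  show ?case
  proof (cases "u \<in> inner A")
    case False
    then obtain i where "i \<in> I" "u = {i}" using forest_leaf[OF A less.prems(1)] less.prems unfolding inner_iff by blast
    then show ?thesis using forestD(4)[OF F] by blast
  next
    case True
    obtain u1 u2 where u12: "u1 \<in> A" "u2 \<in> A" "children u u1 u2" using forest_children[OF A True] by blast
    obtain R where R: "R \<in> roots F" "splits A u R"
      using below[OF True less.prems(2)] lca_image_eq_splits[OF le] by blast
    have "u1 \<subset> u" "u2 \<subset> u" using children_psubset[OF u12(3)] by blast+
    then have "u1 \<in> F" "u2 \<in> F"
      using less.hyps[OF _ u12(1)] less.hyps[OF _ u12(2)] forest_card_psubset[OF A less.prems(1)] less.prems(2)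
      by blast+
    moreover have "R \<inter> u1 \<noteq> {}" "R \<inter> u2 \<noteq> {}" using splits_children[OF R(2) u12(3,1,2)] by blast+
    ultimately have "u \<subseteq> R" using subset_root[OF F R(1)] u12(3) unfolding children_def by blast
    then show ?thesis using forest_le_Int[OF le roots_in[OF R(1)] less.prems(1)] less.prems(1) forestD(2)[OF A]
      by (simp add: Int_absorb2)
  qed
qed

section \<open>Merging two trees\<close>

definition merge :: "'a set set \<Rightarrow> 'a set \<Rightarrow> 'a set \<Rightarrow> 'a set set" where
  "merge P X Y = insert (X \<union> Y) (P - {X, Y})"

lemma merge_commute: "merge P X Y = merge P Y X"
  unfolding merge_def by (simp add: Un_commute insert_commute)

definition finer :: "'a set set \<Rightarrow> 'a set set \<Rightarrow> bool" where
  "finer P Q \<longleftrightarrow> (\<forall>p\<in>P. \<exists>q\<in>Q. p \<subseteq> q)"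

lemma partition_on_merge:
  assumes P: "partition_on I P" and X: "X \<in> P" and Y: "Y \<in> P"
  shows "partition_on I (merge P X Y)"
proof (rule partition_onI)
  show "\<Union> (merge P X Y) = I" using partition_onD1[OF P] X Y unfolding merge_def by blast
  show "{} \<notin> merge P X Y" using partition_on_nonempty[OF P X] partition_onD3[OF P] unfolding merge_def by blast
  have disj: "p \<inter> X = {}" "p \<inter> Y = {}" if "p \<in> P" "p \<noteq> X" "p \<noteq> Y" for p
    using partition_on_eqI[OF P that(1) X] partition_on_eqI[OF P that(1) Y] that(2,3) by blast+
  fix p q assume p: "p \<in> merge P X Y" and q: "q \<in> merge P X Y" and "p \<noteq> q"
  then consider "p = X \<union> Y" "q \<in> P" "q \<noteq> X" "q \<noteq> Y" | "q = X \<union> Y" "p \<in> P" "p \<noteq> X" "p \<noteq> Y"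
    | "p \<in> P" "q \<in> P"
    unfolding merge_def by blast
  then show "disjnt p q"
  proof cases
    case 1
    then show ?thesis using disj[of q] unfolding disjnt_def by blast
  next
    case 2
    then show ?thesis using disj[of p] unfolding disjnt_def by blast
  next
    case 3
    then show ?thesis using partition_on_eqI[OF P] \<open>p \<noteq> q\<close> unfolding disjnt_def by blast
  qed
qed

lemma finer_antisym:
  assumes P: "partition_on I P" and Q: "partition_on I Q" and "finer P Q" "finer Q P"
  shows "P = Q"
proof -
  have "p \<in> Q" if PQ: "partition_on I P" "partition_on I Q" "finer P Q" "finer Q P" "p \<in> P"
    for P Q :: "'a set set" and p
  proof -
    obtain q where q: "q \<in> Q" "p \<subseteq> q" using PQ(3,5) unfolding finer_def by blast
    obtain p' where p': "p' \<in> P" "q \<subseteq> p'" using PQ(4) q(1) unfolding finer_def by blast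
    have "p = p'" using partition_on_eqI[OF PQ(1,5) p'(1)] partition_on_nonempty[OF PQ(1,5)] q(2) p'(2) by blast
    then have "q = p" using q(2) p'(2) by blast
    then show ?thesis using q(1) by simp
  qed
  then show ?thesis using assms by blast
qed

lemma finer_between_merge:
  assumes P: "partition_on I P" and Q: "partition_on I Q" and X: "X \<in> P" and Y: "Y \<in> P"
    and PQ: "finer P Q" and QM: "finer Q (merge P X Y)"
  shows "Q = P \<or> Q = merge P X Y"
proof (cases "\<exists>q\<in>Q. X \<union> Y \<subseteq> q")
  case True
  then have "finer (merge P X Y) Q" using PQ unfolding finer_def merge_def by blast
  then show ?thesis using finer_antisym[OF Q partition_on_merge[OF P X Y] QM] by blast
next
  case False
  have "\<exists>p\<in>P. q \<subseteq> p" if q: "q \<in> Q" for q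
  proof -
    have inside: "Z \<subseteq> q" if Z: "Z \<in> P" "q \<inter> Z \<noteq> {}" for Z
    proof -
      obtain q' where q': "q' \<in> Q" "Z \<subseteq> q'" using PQ Z(1) unfolding finer_def by blast
      then have "q' = q" using partition_on_eqI[OF Q q'(1) q] Z(2) by blast
      then show ?thesis using q'(2) by blast
    qed
    obtain m where m: "m \<in> merge P X Y" "q \<subseteq> m" using QM q unfolding finer_def by blast
    show ?thesis
    proof (cases "m = X \<union> Y")
      case True
      then have "q \<inter> X = {} \<or> q \<inter> Y = {}" using inside[OF X] inside[OF Y] False q by blast
      then show ?thesis using m(2) True X Y by blast
    next
      case False
      then show ?thesis using m unfolding merge_def by blast
    qed
  qed
  then have "finer Q P" unfolding finer_def by blast
  then show ?thesis using finer_antisym[OF P Q PQ] by blast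
qed

lemma roots_finer:
  assumes "forest_le I F H"
  shows "finer (roots F) (roots H)"
  unfolding finer_def
proof
  fix R assume R: "R \<in> roots F"
  have "lca H R \<in> H" using forest_mapD(1)[OF forest_leD(3)[OF assms] roots_in[OF R]] .
  then obtain R' where "R' \<in> roots H" "lca H R \<subseteq> R'" using roots_exist[OF forest_leD(2)[OF assms]] by blast
  then show "\<exists>R'\<in>roots H. R \<subseteq> R'" using lca_upper[of R H] by blast
qed

text \<open>The merged forest restriction A (merge (roots F) RA RB) joins the trees RA and RB of F
  below the new vertex v.\<close>
locale merge_at_vertex =
  fixes I :: "'a set" and F A :: "'a set set" and v v1 v2 RA RB :: "'a set"
  assumes le: "forest_le I F A"
    and v: "v \<in> A" "children v v1 v2" "v1 \<in> A" "v2 \<in> A"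
    and new: "v \<notin> lca A ` inner F"
    and RA: "RA \<in> roots F" "v1 \<subseteq> RA" and RB: "RB \<in> roots F" "v2 \<subseteq> RB"
begin

lemma merge_vertex_inner: "v \<in> inner A"
  using children_inner[OF forest_leD(2)[OF le] v(1,2)] .

lemma merge_vertex_splits:
  assumes "RA \<union> RB \<subseteq> R"
  shows "splits A v R"
proof (rule splitsI[OF forest_leD(2)[OF le] v])
  have "v1 \<noteq> {}" "v2 \<noteq> {}" using v(2) unfolding children_def by blast+
  then show "R \<inter> v1 \<noteq> {}" "R \<inter> v2 \<noteq> {}" using assms RA(2) RB(2) by blast+
qed

lemma merged_roots_distinct: "RA \<noteq> RB"
proof
  assume "RA = RB"
  then have "splits A v RA" using merge_vertex_splits by blast
  then show False using new merge_vertex_inner RA(1) lca_image_eq_splits[OF le] by blast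
qed

lemma merged_roots_disjoint: "RA \<inter> RB = {}"
  using roots_eqI[OF forest_leD(1)[OF le] RA(1) RB(1)] merged_roots_distinct by blast

lemma cross_vertex_unique:
  assumes u: "u \<in> A" "children u u1 u2" "u1 \<in> A" "u2 \<in> A"
    and meets: "u \<inter> RA \<noteq> {}" "u \<inter> RB \<noteq> {}" and sides: "u \<inter> RA \<subseteq> u1" "u \<inter> RB \<subseteq> u2"
  shows "u = v"
proof -
  note A = forest_leD(2)[OF le] and map = forest_leD(3)[OF le]
  have v12: "v1 \<noteq> {}" "v2 \<noteq> {}" "v = v1 \<union> v2" using v(2) unfolding children_def by blast+
  have u12: "u1 \<inter> u2 = {}" using u(2) unfolding children_def by blast
  have "\<not> v \<subset> u"
  proof
    assume "v \<subset> u"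
    then have "v1 \<subseteq> u1" "v2 \<subseteq> u2" using sides RA(2) RB(2) v12(3) by blast+
    moreover have "v \<subseteq> u1 \<or> v \<subseteq> u2" using subset_child[OF A u(2-4) v(1)] \<open>v \<subset> u\<close> by blast
    ultimately show False using u12 v12 by blast
  qed
  moreover have "\<not> u \<subset> v"
  proof
    assume "u \<subset> v"
    then have "u \<subseteq> v1 \<or> u \<subseteq> v2" using subset_child[OF A v(2-4) u(1)] by blast
    then show False using meets RA(2) RB(2) merged_roots_disjoint by blast
  qed
  moreover have "u \<inter> v \<noteq> {}"
  proof
    \<comment> \<open>otherwise the least common ancestor of u and v would be split by both RA and RB\<close>
    assume disj: "u \<inter> v = {}"
    obtain W where W: "W \<in> roots A" "lca A RA \<subseteq> W"
      using roots_exist[OF A forest_mapD(1)[OF map roots_in[OF RA(1)]]] by blast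
    have "RA \<subseteq> W" using W(2) lca_upper[of RA A] by blast
    then have "u \<subseteq> W" "v \<subseteq> W"
      using subset_root[OF A W(1) u(1)] subset_root[OF A W(1) v(1)] meets(1) RA(2) v12 by blast+
    then obtain z z1 z2 where z: "z \<in> A" "z1 \<in> A" "z2 \<in> A" "children z z1 z2" "u \<subseteq> z1" "v \<subseteq> z2"
      using lca_of_disjoint_clusters[OF A u(1) v(1) disj roots_in[OF W(1)]] by blast
    have "RA \<inter> z1 \<noteq> {}" "RA \<inter> z2 \<noteq> {}" "RB \<inter> z1 \<noteq> {}" "RB \<inter> z2 \<noteq> {}"
      using z(5,6) meets RA(2) RB(2) v12 by blast+
    then have "splits A z RA" "splits A z RB" using splitsI[OF A z(1,4,2,3)] by blast+
    then show False
      using splits_unique[OF le _ RA(1) _ RB(1)] children_inner[OF A z(1,4)] merged_roots_distinct by blast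
  qed
  ultimately show ?thesis using forestD(5)[OF A u(1) v(1)] by blast
qed

lemma splits_merged_block_iff:
  assumes u: "u \<in> inner A"
  shows "splits A u (RA \<union> RB) \<longleftrightarrow> splits A u RA \<or> splits A u RB \<or> u = v"
proof
  assume split: "splits A u (RA \<union> RB)"
  note A = forest_leD(2)[OF le]
  obtain u1 u2 where u12: "u1 \<in> A" "u2 \<in> A" "children u u1 u2" using forest_children[OF A u] by blast
  have uA: "u \<in> A" using u unfolding inner_iff by blast
  have both: "(RA \<union> RB) \<inter> u1 \<noteq> {}" "(RA \<union> RB) \<inter> u2 \<noteq> {}" using splits_children[OF split u12(3,1,2)] by blast+
  have u_eq: "u = u1 \<union> u2" using u12(3) unfolding children_def by blast
  show "splits A u RA \<or> splits A u RB \<or> u = v"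
  proof (cases "RA \<inter> u1 \<noteq> {} \<and> RA \<inter> u2 \<noteq> {} \<or> RB \<inter> u1 \<noteq> {} \<and> RB \<inter> u2 \<noteq> {}")
    case True
    then show ?thesis using splitsI[OF A uA u12(3,1,2)] by blast
  next
    case False
    then have "(RA \<inter> u2 = {} \<and> RB \<inter> u1 = {}) \<or> (RA \<inter> u1 = {} \<and> RB \<inter> u2 = {})" using both by blast
    then show ?thesis
    proof
      assume "RA \<inter> u2 = {} \<and> RB \<inter> u1 = {}"
      then show ?thesis using cross_vertex_unique[OF uA u12(3,1,2)] both u_eq by blast
    next
      assume "RA \<inter> u1 = {} \<and> RB \<inter> u2 = {}"
      then show ?thesis using cross_vertex_unique[OF uA children_sym[OF u12(3)] u12(2,1)] both u_eq by blast
    qed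
  qed
next
  assume "splits A u RA \<or> splits A u RB \<or> u = v"
  then show "splits A u (RA \<union> RB)"
    using splits_mono[of A u _ "RA \<union> RB"] u merge_vertex_splits unfolding inner_iff by blast
qed

lemma partition_on_merged_roots: "partition_on I (merge (roots F) RA RB)"
  using partition_on_merge[OF partition_on_roots[OF forest_leD(1)[OF le]] RA(1) RB(1)] .

lemma merge_splits_unique:
  assumes u: "u \<in> inner A" and q: "q \<in> merge (roots F) RA RB" "splits A u q"
    and q': "q' \<in> merge (roots F) RA RB" "splits A u q'"
  shows "q = q'"
proof -
  have old: "R = R'" if "R \<in> roots F" "splits A u R" "R' \<in> roots F" "splits A u R'" for R R'
    using splits_unique[OF le u that] .
  have merged: "R = RA \<or> R = RB"
    if R: "R \<in> roots F" "splits A u R" and RAB: "splits A u (RA \<union> RB)" for R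
  proof -
    have "splits A u RA \<or> splits A u RB \<or> u = v" using splits_merged_block_iff[OF u] RAB by blast
    moreover have "u \<noteq> v \<or> \<not> splits A u R" using new R lca_image_eq_splits[OF le] u by blast
    ultimately show ?thesis using old[OF R(1,2)] RA(1) RB(1) R(2) by blast
  qed
  show ?thesis
    using q q' old merged unfolding merge_def by (metis (no_types, lifting) DiffE insertE insertI1 insertI2)
qed

lemma forest_le_merge: "forest_le I (restriction A (merge (roots F) RA RB)) A"
  using forest_le_restriction[OF forest_leD(2)[OF le] partition_on_merged_roots
      inj_on_lca_restriction[OF forest_leD(2)[OF le] partition_on_merged_roots merge_splits_unique]] .

lemma lca_image_merge:
  "lca A ` inner (restriction A (merge (roots F) RA RB)) = insert v (lca A ` inner F)"
proof -
  note A = forest_leD(2)[OF le]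
  have splits_merge: "(\<exists>q\<in>merge (roots F) RA RB. splits A u q) \<longleftrightarrow> (\<exists>R\<in>roots F. splits A u R) \<or> u = v"
    if "u \<in> inner A" for u
    using splits_merged_block_iff[OF that] RA(1) RB(1) unfolding merge_def by blast
  have "lca A ` inner (restriction A (merge (roots F) RA RB))
      = {u \<in> inner A. \<exists>q\<in>merge (roots F) RA RB. splits A u q}"
    by (rule lca_image_restriction[OF A partition_on_merged_roots])
  also have "\<dots> = insert v {u \<in> inner A. \<exists>R\<in>roots F. splits A u R}"
    using splits_merge merge_vertex_inner by blast
  also have "\<dots> = insert v (lca A ` inner F)" using lca_image_eq_splits[OF le] by simp
  finally show ?thesis .
qed

lemma roots_merge: "roots (restriction A (merge (roots F) RA RB)) = merge (roots F) RA RB"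
proof -
  note A = forest_leD(2)[OF le] and map = forest_leD(3)[OF le]
  have covered: "\<exists>D\<in>A. R \<subseteq> D" if "R \<in> roots F" for R
    using forest_mapD(1)[OF map roots_in[OF that]] lca_upper[of R A] by blast
  obtain W where W: "W \<in> roots A" "v \<subseteq> W" using roots_exist[OF A v(1)] by blast
  have "lca A R \<subseteq> W" if "R \<in> roots F" "v \<inter> R \<noteq> {}" for R
    using subset_root[OF A W(1) forest_mapD(1)[OF map roots_in[OF that(1)]]] that(2) W(2) lca_upper[of R A]
    by blast
  then have "RA \<union> RB \<subseteq> W"
    using RA RB v(2) lca_upper[of RA A] lca_upper[of RB A] unfolding children_def by blast
  then have "\<exists>D\<in>A. q \<subseteq> D" if "q \<in> merge (roots F) RA RB" for q
    using that covered roots_in[OF W(1)] unfolding merge_def by blast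
  then show ?thesis using roots_restriction[OF partition_on_merged_roots] by blast
qed

lemma forest_le_below_merge: "forest_le I F (restriction A (merge (roots F) RA RB))"
proof (rule forest_le_if_refines[OF le forest_le_merge])
  fix C assume "C \<in> F"
  then obtain R where R: "R \<in> roots F" "C \<subseteq> R" using roots_exist[OF forest_leD(1)[OF le]] by blast
  then have "R \<subseteq> RA \<union> RB \<or> R \<in> merge (roots F) RA RB" unfolding merge_def by blast
  moreover have "merge (roots F) RA RB \<subseteq> restriction A (merge (roots F) RA RB)"
    using roots_merge roots_in by blast
  moreover have "RA \<union> RB \<in> merge (roots F) RA RB" unfolding merge_def by blast
  ultimately show "\<exists>D\<in>restriction A (merge (roots F) RA RB). C \<subseteq> D" using R(2) by blast
qed

lemma covers_merge: "covers I F (restriction A (merge (roots F) RA RB))"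
proof -
  let ?M = "merge (roots F) RA RB"
  let ?G = "restriction A ?M"
  note F = forest_leD(1)[OF le]
  have "v \<in> lca A ` inner ?G" using lca_image_merge by simp
  then have "F \<noteq> ?G" using new by (auto simp only:)
  moreover have "H = F \<or> H = ?G" if FH: "forest_le I F H" and HG: "forest_le I H ?G" for H
  proof -
    have "finer (roots F) (roots H)" using roots_finer[OF FH] .
    moreover have "finer (roots H) ?M" using roots_finer[OF HG] unfolding roots_merge .
    ultimately have "roots H = roots F \<or> roots H = ?M"
      using finer_between_merge[OF partition_on_roots[OF F] partition_on_roots[OF forest_leD(2)[OF FH]] RA(1) RB(1)]
      by blast
    then show ?thesis
      using forest_le_eq_if_roots_eq[OF FH forest_le_refl[OF forest_leD(2)[OF FH]]]
        forest_le_eq_if_roots_eq[OF HG forest_le_refl[OF forest_leD(2)[OF HG]]] roots_merge by metis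
  qed
  ultimately show ?thesis unfolding covers_def using forest_le_below_merge by blast
qed

end

section \<open>Covers in the interval below a tree\<close>

lemma covers_is_merge:
  assumes cov: "covers I F G"
  obtains v w1 w2 R1 R2 where "merge_at_vertex I F G v w1 w2 R1 R2"
    "roots G = merge (roots F) R1 R2" "inner G = insert v (lca G ` inner F)"
proof -
  have le: "forest_le I F G" and "F \<noteq> G"
    and between: "\<And>H. forest_le I F H \<Longrightarrow> forest_le I H G \<Longrightarrow> H = F \<or> H = G"
    using cov unfolding covers_def by blast+
  note F = forest_leD(1)[OF le] and G = forest_leD(2)[OF le]
  obtain u where "u \<in> inner G - lca G ` inner F"
    using forest_le_eq_if_same_vertices[OF le] \<open>F \<noteq> G\<close> by blast
  then obtain v where v: "v \<in> inner G - lca G ` inner F"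
    and least: "\<And>u. u \<in> inner G - lca G ` inner F \<Longrightarrow> card v \<le> card u"
    using ex_has_least_nat[of "\<lambda>u. u \<in> inner G - lca G ` inner F" u card] by blast
  have vG: "v \<in> G" using v by (simp add: inner_iff)
  have below: "u \<in> lca G ` inner F" if u: "u \<in> inner G" "u \<subset> v" for u
  proof -
    have "\<not> card v \<le> card u" using forest_card_psubset[OF G vG u(2)] by simp
    then show ?thesis using least[of u] u(1) by blast
  qed
  obtain w1 w2 where w: "w1 \<in> G" "w2 \<in> G" "children v w1 w2" using forest_children[OF G] v by blast
  then have "w1 \<in> F" "w2 \<in> F"
    using mem_if_vertices_below[OF le below] children_psubset[OF w(3)] by blast+
  obtain R1 where R1: "R1 \<in> roots F" "w1 \<subseteq> R1" using roots_exist[OF F \<open>w1 \<in> F\<close>] .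
  obtain R2 where R2: "R2 \<in> roots F" "w2 \<subseteq> R2" using roots_exist[OF F \<open>w2 \<in> F\<close>] .
  have M: "merge_at_vertex I F G v w1 w2 R1 R2"
    unfolding merge_at_vertex_def using le vG w v R1 R2 by blast
  let ?H = "restriction G (merge (roots F) R1 R2)"
  have "F \<noteq> ?H" using merge_at_vertex.covers_merge[OF M] unfolding covers_def by blast
  then have "?H = G"
    using between[OF merge_at_vertex.forest_le_below_merge[OF M] merge_at_vertex.forest_le_merge[OF M]] by blast
  then show ?thesis
    using that[OF M] merge_at_vertex.roots_merge[OF M] merge_at_vertex.lca_image_merge[OF M] lca_image_inner[of G]
    by simp
qed

lemma bot_forest_le:
  assumes A: "forest I A"
  shows "forest_le I (bot_forest I) A"
proof (rule forest_leI[OF _ A])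
  show "forest I (bot_forest I)"
    using forestD(1)[OF A] unfolding forest_def bot_forest_def by auto
  show "\<exists>D\<in>A. C \<subseteq> D" if "C \<in> bot_forest I" for C
    using that forestD(4)[OF A] unfolding bot_forest_def by blast
  have "inner (bot_forest I) = {}" unfolding inner_def bot_forest_def by auto
  then show "inj_on (lca A) (inner (bot_forest I))" by simp
  show "lca A C1 \<noteq> lca A C \<and> lca A C2 \<noteq> lca A C"
    if C: "C \<in> bot_forest I" and ch: "children C C1 C2" for C C1 C2
  proof -
    obtain i where "C = {i}" using C unfolding bot_forest_def by blast
    moreover have "C1 \<noteq> {}" "C2 \<noteq> {}" "C1 \<inter> C2 = {}" "C1 \<union> C2 = C"
      using ch unfolding children_def by blast+
    ultimately have "C1 = {i}" "C2 = {i}" by auto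
    then show ?thesis using \<open>C1 \<inter> C2 = {}\<close> by simp
  qed
qed

lemma vT_insert:
  assumes FG: "forest_le I F G" and GT: "forest_le I G T" and FT: "forest_le I F T"
    and inner: "inner G = insert v (lca G ` inner F)" and new: "v \<notin> lca G ` inner F"
  shows "vT I T G = insert (lca T v) (vT I T F)" "lca T v \<notin> vT I T F"
proof -
  note F = forest_leD(1)[OF FG] and mapF = forest_leD(3)[OF FG] and mapG = forest_leD(3)[OF GT]
  have comp: "lca T (lca G C) = lca T C" if "C \<in> inner F" for C
  proof -
    have "C \<in> F" using that unfolding inner_iff by blast
    then show ?thesis using lca_lca[OF GT forestD(2)[OF F] forest_mapD(1)[OF mapF] lca_upper] by blast
  qed
  have "vT I T G = lca T ` insert v (lca G ` inner F)" using vT_eq_lca_image[OF GT] inner by simp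
  also have "\<dots> = insert (lca T v) (lca T ` inner F)" using comp by (simp add: image_image)
  also have "\<dots> = insert (lca T v) (vT I T F)" using vT_eq_lca_image[OF FT] by simp
  finally show "vT I T G = insert (lca T v) (vT I T F)" .
  show "lca T v \<notin> vT I T F"
  proof
    assume "lca T v \<in> vT I T F"
    then obtain C where C: "C \<in> inner F" "lca T v = lca T (lca G C)"
      using vT_eq_lca_image[OF FT] comp by auto
    moreover have "lca G C \<in> inner G" "v \<in> inner G" using forest_mapD(3)[OF mapF C(1)] inner by blast+
    ultimately have "v = lca G C" using inj_onD[OF forest_mapD(4)[OF mapG]] by blast
    then show False using new C(1) by blast
  qed
qed

lemma edge_label_eq:
  assumes "x \<notin> vT I T F" "vT I T G = insert x (vT I T F)"
  shows "edge_label I T F G = x"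
  unfolding edge_label_def
proof (rule the_equality)
  show "x \<notin> vT I T F \<and> vT I T G = insert x (vT I T F)" using assms by simp
  fix y assume "y \<notin> vT I T F \<and> vT I T G = insert y (vT I T F)"
  then show "y = x" using assms by blast
qed

lemma min_vertex_minimal:
  assumes lab: "nice_order T lab" and S: "S \<subseteq> inner T" "S \<noteq> {}"
  shows "min_vertex lab S \<in> S" "\<And>u. u \<in> S \<Longrightarrow> u \<subseteq> min_vertex lab S \<Longrightarrow> u = min_vertex lab S"
proof -
  have inj: "inj_on lab (inner T)"
    and mono: "\<And>u w. u \<in> inner T \<Longrightarrow> w \<in> inner T \<Longrightarrow> u \<subseteq> w \<Longrightarrow> lab u \<le> lab w"
    using lab unfolding nice_order_def bij_betw_def by auto
  obtain s where "s \<in> S" using S(2) by blast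
  then obtain m where m: "m \<in> S" and least: "\<And>w. w \<in> S \<Longrightarrow> lab m \<le> lab w"
    using ex_has_least_nat[of "\<lambda>w. w \<in> S" s lab] by blast
  have eq: "lab u = lab m \<Longrightarrow> u \<in> S \<Longrightarrow> u = m" for u
    using inj_onD[OF inj] S(1) m by blast
  have "min_vertex lab S = m"
    unfolding min_vertex_def
  proof (rule the_equality)
    show "m \<in> S \<and> (\<forall>w\<in>S. lab m \<le> lab w)" using m least by blast
    fix y assume y: "y \<in> S \<and> (\<forall>w\<in>S. lab y \<le> lab w)"
    then have "lab y \<le> lab m" using m by blast
    then show "y = m" using eq least[of y] y by simp
  qed
  moreover have "u = m" if u: "u \<in> S" "u \<subseteq> m" for u
  proof -
    have "lab u \<le> lab m" using mono[OF _ _ u(2)] u(1) m S(1) by blast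
    then show ?thesis using eq least[OF u(1)] u(1) by simp
  qed
  ultimately show "min_vertex lab S \<in> S" "\<And>u. u \<in> S \<Longrightarrow> u \<subseteq> min_vertex lab S \<Longrightarrow> u = min_vertex lab S"
    using m by auto
qed

context merge_at_vertex
begin

lemma merge_in_interval: "restriction A (merge (roots F) RA RB) \<in> interval I A"
  unfolding interval_def using bot_forest_le[OF forest_leD(1)[OF forest_le_merge]] forest_le_merge by blast

lemma edge_label_merge: "edge_label I A F (restriction A (merge (roots F) RA RB)) = v"
proof (rule edge_label_eq)
  show "v \<notin> vT I A F" using new vT_eq_lca_image[OF le] by simp
  show "vT I A (restriction A (merge (roots F) RA RB)) = insert v (vT I A F)"
    using vT_eq_lca_image[OF forest_le_merge] lca_image_merge vT_eq_lca_image[OF le] by simp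
qed

lemma cover_with_label_unique:
  assumes G: "G \<in> interval I A" and cov: "covers I F G" and label: "edge_label I A F G = v"
  shows "G = restriction A (merge (roots F) RA RB)"
proof -
  note F = forest_leD(1)[OF le]
  have GA: "forest_le I G A" using G unfolding interval_def by blast
  obtain v' w1 w2 R1 R2 where M: "merge_at_vertex I F G v' w1 w2 R1 R2"
    and roots: "roots G = merge (roots F) R1 R2" and inner: "inner G = insert v' (lca G ` inner F)"
    using covers_is_merge[OF cov] by blast
  interpret G: merge_at_vertex I F G v' w1 w2 R1 R2 by (rule M)
  note vT = vT_insert[OF G.le GA le inner G.new]
  have "lca A v' = v" using edge_label_eq[OF vT(2,1)] label by simp
  then have sep: "(lca A w1 \<subseteq> v1 \<and> lca A w2 \<subseteq> v2) \<or> (lca A w1 \<subseteq> v2 \<and> lca A w2 \<subseteq> v1)"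
    using forest_le_children_separated[OF GA G.v(1,2,3,4), of v1 v2] v(2-4) by simp
  have hit: "R = R'" if R: "R \<in> roots F" "R' \<in> roots F" "w \<subseteq> R" "w \<noteq> {}" "lca A w \<subseteq> R'" for R R' w
    using roots_eqI[OF F R(1,2)] lca_upper[of w A] R(3-5) by blast
  have "w1 \<noteq> {}" "w2 \<noteq> {}" using G.v(2) unfolding children_def by blast+
  then have "R1 = RA \<and> R2 = RB \<or> R1 = RB \<and> R2 = RA"
    using sep hit[OF G.RA(1) RA(1) G.RA(2)] hit[OF G.RA(1) RB(1) G.RA(2)]
      hit[OF G.RB(1) RA(1) G.RB(2)] hit[OF G.RB(1) RB(1) G.RB(2)] RA(2) RB(2) by blast
  then have "roots G = merge (roots F) RA RB" using roots merge_commute by metis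
  then show ?thesis using forest_le_eq_if_roots_eq[OF GA forest_le_merge] roots_merge by simp
qed

end

theorem lemma4p2:
  fixes I :: "'a set" and T F :: "'a set set" and lab :: "'a set \<Rightarrow> nat"
  assumes "finite I" and "tree I T" and "nice_order T lab"
    and "F \<in> interval I T" and "F \<noteq> T"
  shows "\<exists>!G. G \<in> interval I T \<and> covers I F G \<and>
           edge_label I T F G = min_vertex lab (inner T - vT I T F)"
proof -
  \<comment> \<open>only F \<le> T is used: the argument works for any forest T\<close>
  have le: "forest_le I F T" using assms(4) unfolding interval_def by blast
  note F = forest_leD(1)[OF le] and T = forest_leD(2)[OF le] and vT = vT_eq_lca_image[OF le]
  define v where "v = min_vertex lab (inner T - vT I T F)"
  have "inner T - vT I T F \<noteq> {}" using forest_le_eq_if_same_vertices[OF le] vT assms(5) by blast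
  note min = min_vertex_minimal[OF assms(3) Diff_subset this, folded v_def]
  have v: "v \<in> T" "v \<in> inner T" "v \<notin> lca T ` inner F" using min(1) vT by (simp_all add: inner_iff)
  have below: "u \<in> lca T ` inner F" if "u \<in> inner T" "u \<subset> v" for u
    using min(2)[of u] that vT by blast
  obtain v1 v2 where children: "v1 \<in> T" "v2 \<in> T" "children v v1 v2" using forest_children[OF T v(2)] by blast
  then have "v1 \<in> F" "v2 \<in> F" using mem_if_vertices_below[OF le below] children_psubset[OF children(3)] by blast+
  obtain RA where RA: "RA \<in> roots F" "v1 \<subseteq> RA" using roots_exist[OF F \<open>v1 \<in> F\<close>] .
  obtain RB where RB: "RB \<in> roots F" "v2 \<subseteq> RB" using roots_exist[OF F \<open>v2 \<in> F\<close>] .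
  have "merge_at_vertex I F T v v1 v2 RA RB"
    unfolding merge_at_vertex_def using le v(1,3) children RA RB by blast
  then interpret merge_at_vertex I F T v v1 v2 RA RB .
  show ?thesis
    using merge_in_interval covers_merge edge_label_merge cover_with_label_unique unfolding v_def by blast
qed

end
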